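(* Let $K$ be a field of characteristic $0$ or $>n$ and $P=K[v_1,\dots,v_n]$. Let $p\in P$ be a monomial and write $p=v_1^rv$ with $v$ a monomial not divisible by $v_1$. Then every Artin monomial occurring (with nonzero coefficient) in the Artin reduction of $p$ has $v_1$-exponent at least $r$.
   Context: Let $e_1,\dots,e_n$ be the elementary symmetric polynomials in $v_1,\dots,v_n$. An Artin monomial is $v_1^{l_1}\cdots v_n^{l_n}$ with $0\le l_i\le n-i$ for all $i$; the Artin monomials form a $K$-basis of $P/(e_1,\dots,e_n)$. The Artin reduction of $p\in P$ is the unique $K$-linear combination $p'$ of Artin monomials with $p\equiv p'$ modulo $(e_1,\dots,e_n)$. *)

theory Defs
  imports Main "HOL-Library.Poly_Mapping"
begin

text \<open>Multivariate polynomials over a field K are represented as finitely supported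
  maps from monomials (exponent vectors \<open>nat \<Rightarrow>\<^sub>0 nat\<close>) to coefficients.\<close>

type_synonym 'a mpoly = "(nat \<Rightarrow>\<^sub>0 nat) \<Rightarrow>\<^sub>0 'a"

definition poly_in :: "nat \<Rightarrow> ('a::zero) mpoly \<Rightarrow> bool" where
  "poly_in n f \<longleftrightarrow> (\<forall>m\<in>Poly_Mapping.keys f. Poly_Mapping.keys m \<subseteq> {1..n})"

definition var :: "nat \<Rightarrow> ('a::{zero,one}) mpoly" where
  "var i = Poly_Mapping.single (Poly_Mapping.single i 1) 1"

definition elem_sym :: "nat \<Rightarrow> nat \<Rightarrow> ('a::comm_ring_1) mpoly" where
  "elem_sym n k = (\<Sum>S\<in>{S. S \<subseteq> {1..n} \<and> card S = k}.
       Poly_Mapping.single (\<Sum>i\<in>S. Poly_Mapping.single i 1) 1)"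

definition sym_ideal :: "nat \<Rightarrow> ('a::comm_ring_1) mpoly set" where
  "sym_ideal n = {(\<Sum>k=1..n. q k * elem_sym n k) | q. \<forall>k. poly_in n (q k)}"

definition artin_monomial :: "nat \<Rightarrow> (nat \<Rightarrow>\<^sub>0 nat) \<Rightarrow> bool" where
  "artin_monomial n m \<longleftrightarrow> Poly_Mapping.keys m \<subseteq> {1..n} \<and> (\<forall>i\<in>{1..n}. Poly_Mapping.lookup m i \<le> n - i)"

text \<open>p' is the Artin reduction of p: a K-linear combination of Artin monomials
  with p \<equiv> p' modulo (e_1,...,e_n).  (By the Artin basis theorem it exists and is unique.)\<close>
definition is_artin_reduction :: "nat \<Rightarrow> ('a::comm_ring_1) mpoly \<Rightarrow> 'a mpoly \<Rightarrow> bool" where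
  "is_artin_reduction n p p' \<longleftrightarrow>
     (\<forall>m\<in>Poly_Mapping.keys p'. artin_monomial n m) \<and> p - p' \<in> sym_ideal n"

end

theory Submission
  imports Defs "HOL-Combinatorics.Permutations"
begin

text \<open>Let \<open>\<delta> = (n - 1, n - 2, \<dots>, 0)\<close> be the staircase exponent and
  \<open>L g = (\<Sum>\<sigma>. sign \<sigma> * coefficient of v\<^bsup>\<delta> \<circ> \<sigma>\<^esup> in g)\<close> the pairing with the
  Vandermonde determinant. \<open>L\<close> kills the ideal \<open>(e\<^sub>1, \<dots>, e\<^sub>n)\<close>: if two exponents of a
  monomial \<open>v\<^bsup>m\<^esup>\<close> agree, \<open>v\<^bsup>m\<^esup> e\<^sub>k\<close> is invariant under swapping the two
  variables and its contributions cancel in pairs; if they are all distinct, \<open>v\<^bsup>m\<^esup>\<close> already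
  has degree at least \<open>0 + 1 + \<dots> + (n - 1) = |\<delta>|\<close>, so for \<open>k \<ge> 1\<close> no monomial of
  \<open>v\<^bsup>m\<^esup> e\<^sub>k\<close> is a permuted staircase.

  Let \<open>a\<close> be the lexicographically least monomial of the Artin reduction \<open>p'\<close>; it has the
  least \<open>v\<^sub>1\<close>-exponent among them. Artin monomials lie below \<open>\<delta>\<close>, and triangularity gives
  \<open>L (v\<^bsup>\<delta> - a\<^esup> p') = coefficient of a in p' \<noteq> 0\<close>. If \<open>a\<^sub>1 < r\<close>, every monomial
  of \<open>v\<^bsup>\<delta> - a\<^esup> p\<close> has \<open>v\<^sub>1\<close>-exponent above \<open>n - 1\<close>, so
  \<open>L (v\<^bsup>\<delta> - a\<^esup> p) = 0\<close>, contradicting \<open>p \<equiv> p'\<close>.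
  The argument works over any commutative ring.\<close>

lemma sum_signed_permutations_eq_0:
  fixes f :: "('b \<Rightarrow> 'b) \<Rightarrow> 'a::comm_ring_1"
  assumes "finite A" "i \<in> A" "j \<in> A" "i \<noteq> j"
    and invariant: "\<And>\<sigma>. \<sigma> permutes A \<Longrightarrow> f (\<sigma> \<circ> transpose i j) = f \<sigma>"
  shows "(\<Sum>\<sigma> | \<sigma> permutes A. of_int (sign \<sigma>) * f \<sigma>) = 0"
proof -
  let ?\<tau> = "transpose i j"
  let ?F = "\<lambda>\<sigma>. of_int (sign \<sigma>) * f \<sigma>"
  \<comment> \<open>Pairing even with odd permutations, rather than deducing \<open>2 * sum = 0\<close>, keeps this
    valid in characteristic 2.\<close>
  define Ev where "Ev = {\<sigma>. \<sigma> permutes A \<and> evenperm \<sigma>}"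
  define Od where "Od = {\<sigma>. \<sigma> permutes A \<and> \<not> evenperm \<sigma>}"
  have \<tau>: "?\<tau> permutes A" "permutation ?\<tau>" "\<not> evenperm ?\<tau>"
    using assms by (auto simp: permutes_swap_id permutation_swap_id evenperm_swap)
  have swap_permutes: "\<sigma> \<circ> ?\<tau> permutes A" if "\<sigma> permutes A" for \<sigma>
    using permutes_compose[OF \<tau>(1) that] .
  have odd_swap: "evenperm (\<sigma> \<circ> ?\<tau>) \<longleftrightarrow> \<not> evenperm \<sigma>" if "\<sigma> permutes A" for \<sigma>
  proof -
    have "permutation \<sigma>"
      using that assms(1) permutation_permutes by blast
    then show ?thesis
      using \<tau> by (simp add: evenperm_comp)
  qed
  have fin: "finite {\<sigma>. \<sigma> permutes A}"
    using assms(1) by (rule finite_permutations)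
  have "sum ?F Od = sum (\<lambda>\<sigma>. ?F (\<sigma> \<circ> ?\<tau>)) Ev"
    by (rule sum.reindex_bij_witness[where i = "\<lambda>\<sigma>. \<sigma> \<circ> ?\<tau>" and j = "\<lambda>\<sigma>. \<sigma> \<circ> ?\<tau>"])
      (auto simp: Ev_def Od_def comp_assoc odd_swap swap_permutes)
  also have "\<dots> = - sum ?F Ev"
    by (auto simp: Ev_def sum_negf sign_def odd_swap invariant intro!: sum.cong)
  finally have "sum ?F Od = - sum ?F Ev" .
  moreover have "(\<Sum>\<sigma> | \<sigma> permutes A. ?F \<sigma>) = sum ?F Ev + sum ?F Od"
    unfolding Ev_def Od_def using fin by (subst sum.union_disjoint[symmetric]) (auto intro: sum.cong)
  ultimately show ?thesis by simp
qed

lemma sum_lessThan_card_le: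
  fixes A :: "nat set"
  assumes "finite A"
  shows "\<Sum>{..<card A} \<le> \<Sum>A"
  using assms
proof (induction A rule: finite_remove_induct)
  case (remove A)
  define M where "M = Max A"
  have "M \<in> A"
    using remove.hyps M_def by simp
  have "A \<subseteq> {..M}"
    using remove.hyps M_def by auto
  then have "card A \<le> Suc M"
    using card_mono[of "{..M}" A] by simp
  have card_A: "card A = Suc (card (A - {M}))"
    using card_Suc_Diff1[OF remove.hyps(1) \<open>M \<in> A\<close>] by simp
  have "\<Sum>{..<card A} = \<Sum>{..<card (A - {M})} + card (A - {M})"
    unfolding card_A by simp
  also have "\<dots> \<le> \<Sum>(A - {M}) + M"
    using remove.IH[OF \<open>M \<in> A\<close>] \<open>card A \<le> Suc M\<close> card_A by simp
  also have "\<dots> = \<Sum>A"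
    using \<open>M \<in> A\<close> remove.hyps by (simp add: sum.remove)
  finally show ?case .
qed simp

lemma poly_mapping_sum_single_keys:
  "f = (\<Sum>m\<in>Poly_Mapping.keys f. Poly_Mapping.single m (Poly_Mapping.lookup f m))"
  by (rule poly_mapping_eqI) (simp add: lookup_sum lookup_single when_def in_keys_iff)

lemma var_power: "var i ^ r = Poly_Mapping.single (Poly_Mapping.single i r) 1"
  by (induction r) (simp_all add: var_def mult_single single_add[symmetric])

definition staircase :: "nat \<Rightarrow> (nat \<Rightarrow> nat) \<Rightarrow> (nat \<Rightarrow>\<^sub>0 nat)" where
  "staircase n \<sigma> = Abs_poly_mapping (\<lambda>i. if i \<in> {1..n} then n - \<sigma> i else 0)"

lemma lookup_staircase:
  "Poly_Mapping.lookup (staircase n \<sigma>) i = (if i \<in> {1..n} then n - \<sigma> i else 0)"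
proof -
  have "finite {i. (if i \<in> {1..n} then n - \<sigma> i else 0) \<noteq> 0}"
    by (rule finite_subset[of _ "{1..n}"]) auto
  then show ?thesis
    unfolding staircase_def by simp
qed

lemma sum_staircase:
  assumes "\<sigma> permutes {1..n}"
  shows "(\<Sum>i=1..n. Poly_Mapping.lookup (staircase n \<sigma>) i) = \<Sum>{..<n}"
proof -
  have "(\<Sum>i=1..n. Poly_Mapping.lookup (staircase n \<sigma>) i) = (\<Sum>i=1..n. n - \<sigma> i)"
    by (simp add: lookup_staircase)
  also have "\<dots> = (\<Sum>i=1..n. n - i)"
    using sum.permute[OF assms, of "\<lambda>i. n - i"] by (simp add: comp_def)
  also have "\<dots> = \<Sum>{..<n}"
    by (rule sum.reindex_bij_witness[where i = "\<lambda>i. n - i" and j = "\<lambda>i. n - i"]) auto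
  finally show ?thesis .
qed

lemma staircase_eq_id_iff:
  assumes "\<sigma> permutes {1..n}"
  shows "staircase n id = staircase n \<sigma> \<longleftrightarrow> \<sigma> = id"
proof
  assume eq: "staircase n id = staircase n \<sigma>"
  show "\<sigma> = id"
  proof
    fix i
    show "\<sigma> i = id i"
    proof (cases "i \<in> {1..n}")
      case True
      then have "\<sigma> i \<in> {1..n}"
        using permutes_in_image[OF assms] by simp
      then show ?thesis
        using True arg_cong[OF eq, of "\<lambda>f. Poly_Mapping.lookup f i"] by (auto simp: lookup_staircase)
    next
      case False
      then show ?thesis
        using permutes_not_in[OF assms] by simp
    qed
  qed
qed simp

lemma lookup_staircase_1_le:
  assumes "\<sigma> permutes {1..n}"
  shows "Poly_Mapping.lookup (staircase n \<sigma>) 1 \<le> Poly_Mapping.lookup (staircase n id) 1"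
  using permutes_in_image[OF assms, of 1] by (auto simp: lookup_staircase)

definition set_monomial :: "nat set \<Rightarrow> (nat \<Rightarrow>\<^sub>0 nat)" where
  "set_monomial S = (\<Sum>i\<in>S. Poly_Mapping.single i 1)"

lemma lookup_set_monomial:
  "finite S \<Longrightarrow> Poly_Mapping.lookup (set_monomial S) j = (if j \<in> S then 1 else 0)"
  unfolding set_monomial_def by (simp add: lookup_sum lookup_single when_def)

lemma add_set_monomial_neq_staircase:
  assumes inj: "inj_on (Poly_Mapping.lookup m) {1..n}"
    and S: "S \<subseteq> {1..n}" "S \<noteq> {}" and \<sigma>: "\<sigma> permutes {1..n}"
  shows "m + set_monomial S \<noteq> staircase n \<sigma>"
proof
  assume eq: "m + set_monomial S = staircase n \<sigma>"
  have "finite S"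
    using S(1) finite_subset by blast
  have "\<Sum>{..<n} \<le> (\<Sum>i=1..n. Poly_Mapping.lookup m i)"
  proof -
    have "card (Poly_Mapping.lookup m ` {1..n}) = n"
      using card_image[OF inj] by simp
    moreover have "\<Sum>(Poly_Mapping.lookup m ` {1..n}) = (\<Sum>i=1..n. Poly_Mapping.lookup m i)"
      using sum.reindex[OF inj, of id] by simp
    ultimately show ?thesis
      using sum_lessThan_card_le[of "Poly_Mapping.lookup m ` {1..n}"] by simp
  qed
  also have "\<dots> < (\<Sum>i=1..n. Poly_Mapping.lookup m i) + card S"
    using \<open>finite S\<close> S(2) by (simp add: card_gt_0_iff)
  also have "\<dots> = (\<Sum>i=1..n. Poly_Mapping.lookup (m + set_monomial S) i)"
    using \<open>finite S\<close> S(1)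
    by (simp add: lookup_add lookup_set_monomial sum.distrib sum.If_cases Int_absorb1)
  also have "\<dots> = \<Sum>{..<n}"
    using eq sum_staircase[OF \<sigma>] by simp
  finally show False by simp
qed

definition alt_coeff :: "nat \<Rightarrow> ('a::comm_ring_1) mpoly \<Rightarrow> 'a" where
  "alt_coeff n g = (\<Sum>\<sigma> | \<sigma> permutes {1..n}. of_int (sign \<sigma>) * Poly_Mapping.lookup g (staircase n \<sigma>))"

lemma alt_coeff_diff: "alt_coeff n (f - g) = alt_coeff n f - alt_coeff n g"
  unfolding alt_coeff_def by (simp add: lookup_minus right_diff_distrib sum_subtractf)

lemma alt_coeff_sum: "alt_coeff n (sum F A) = (\<Sum>x\<in>A. alt_coeff n (F x))"
  unfolding alt_coeff_def by (simp add: lookup_sum sum_distrib_left sum.swap[of _ A])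

lemma alt_coeff_single:
  "alt_coeff n (Poly_Mapping.single w c) =
     (\<Sum>\<sigma> | \<sigma> permutes {1..n}. of_int (sign \<sigma>) * (c when w = staircase n \<sigma>))"
  unfolding alt_coeff_def by (simp add: lookup_single)

lemma alt_coeff_single_staircase_id: "alt_coeff n (Poly_Mapping.single (staircase n id) c) = c"
proof -
  have "alt_coeff n (Poly_Mapping.single (staircase n id) c) =
      (\<Sum>\<sigma> | \<sigma> permutes {1..n}. if \<sigma> = id then c else 0)"
    unfolding alt_coeff_single by (rule sum.cong) (auto simp: staircase_eq_id_iff)
  also have "\<dots> = c"
    by (simp add: permutes_id finite_permutations)
  finally show ?thesis .
qed

lemma lookup_single_mult_elem_sym:
  "Poly_Mapping.lookup (Poly_Mapping.single m c * elem_sym n k) w =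
     (\<Sum>S | S \<subseteq> {1..n} \<and> card S = k. c when m + set_monomial S = w)"
  unfolding elem_sym_def set_monomial_def
  by (simp add: sum_distrib_left mult_single lookup_sum lookup_single)

lemma lookup_single_mult_elem_sym_swap:
  assumes ij: "i \<in> {1..n}" "j \<in> {1..n}" and m: "Poly_Mapping.lookup m i = Poly_Mapping.lookup m j"
    and \<sigma>: "\<sigma> permutes {1..n}"
  shows "Poly_Mapping.lookup (Poly_Mapping.single m c * elem_sym n k) (staircase n (\<sigma> \<circ> transpose i j))
       = Poly_Mapping.lookup (Poly_Mapping.single m c * elem_sym n k) (staircase n \<sigma>)"
proof -
  let ?\<tau> = "transpose i j"
  define Sk where "Sk = {S. S \<subseteq> {1..n} \<and> card S = k}"
  have \<tau>: "?\<tau> permutes {1..n}"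
    using ij by (rule permutes_swap_id)
  have Sk_swap: "?\<tau> ` S \<in> Sk" if "S \<in> Sk" for S
    using that permutes_image[OF \<tau>] by (auto simp: Sk_def card_image)
  have swap_eq: "m + set_monomial (?\<tau> ` S) = staircase n \<sigma> \<longleftrightarrow> m + set_monomial S = staircase n (\<sigma> \<circ> ?\<tau>)"
    if "S \<in> Sk" for S
  proof -
    have "finite S"
      using that finite_subset unfolding Sk_def by blast
    have "Poly_Mapping.lookup m (?\<tau> l) = Poly_Mapping.lookup m l" for l
      using m by (simp add: transpose_def)
    moreover have "Poly_Mapping.lookup (set_monomial (?\<tau> ` S)) (?\<tau> l) = Poly_Mapping.lookup (set_monomial S) l" for l
      using \<open>finite S\<close> by (simp add: lookup_set_monomial inj_image_mem_iff)
    ultimately have lhs: "Poly_Mapping.lookup (m + set_monomial (?\<tau> ` S)) (?\<tau> l) = Poly_Mapping.lookup (m + set_monomial S) l" for l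
      by (simp add: lookup_add)
    have rhs: "Poly_Mapping.lookup (staircase n \<sigma>) (?\<tau> l) = Poly_Mapping.lookup (staircase n (\<sigma> \<circ> ?\<tau>)) l" for l
      using permutes_in_image[OF \<tau>] by (simp add: lookup_staircase)
    show ?thesis
    proof
      assume eq: "m + set_monomial (?\<tau> ` S) = staircase n \<sigma>"
      show "m + set_monomial S = staircase n (\<sigma> \<circ> ?\<tau>)"
      proof (rule poly_mapping_eqI)
        fix l
        show "Poly_Mapping.lookup (m + set_monomial S) l = Poly_Mapping.lookup (staircase n (\<sigma> \<circ> ?\<tau>)) l"
          using lhs[of l] rhs[of l] unfolding eq by simp
      qed
    next
      assume eq: "m + set_monomial S = staircase n (\<sigma> \<circ> ?\<tau>)"
      show "m + set_monomial (?\<tau> ` S) = staircase n \<sigma>"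
      proof (rule poly_mapping_eqI)
        fix l
        show "Poly_Mapping.lookup (m + set_monomial (?\<tau> ` S)) l = Poly_Mapping.lookup (staircase n \<sigma>) l"
          using lhs[of "?\<tau> l"] rhs[of "?\<tau> l"] unfolding eq by simp
      qed
    qed
  qed
  show ?thesis
    unfolding lookup_single_mult_elem_sym Sk_def[symmetric]
    by (rule sum.reindex_bij_witness[where i = "image ?\<tau>" and j = "image ?\<tau>"])
      (auto simp: image_comp swap_eq Sk_swap)
qed

lemma alt_coeff_single_mult_elem_sym:
  assumes "1 \<le> k"
  shows "alt_coeff n (Poly_Mapping.single m c * elem_sym n k) = 0"
proof (cases "inj_on (Poly_Mapping.lookup m) {1..n}")
  case True
  have "Poly_Mapping.lookup (Poly_Mapping.single m c * elem_sym n k) (staircase n \<sigma>) = 0"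
    if "\<sigma> permutes {1..n}" for \<sigma>
    unfolding lookup_single_mult_elem_sym
  proof (intro sum.neutral ballI)
    fix S
    assume "S \<in> {S. S \<subseteq> {1..n} \<and> card S = k}"
    then have "S \<subseteq> {1..n}" "S \<noteq> {}"
      using assms by auto
    then show "(c when m + set_monomial S = staircase n \<sigma>) = 0"
      using add_set_monomial_neq_staircase[OF True _ _ that] by simp
  qed
  then show ?thesis
    unfolding alt_coeff_def by simp
next
  case False
  then obtain i j where ij: "i \<in> {1..n}" "j \<in> {1..n}" "i \<noteq> j"
    and m: "Poly_Mapping.lookup m i = Poly_Mapping.lookup m j"
    unfolding inj_on_def by blast
  show ?thesis
    unfolding alt_coeff_def
    by (rule sum_signed_permutations_eq_0[OF _ ij])
      (simp_all add: lookup_single_mult_elem_sym_swap[OF ij(1,2) m])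
qed

lemma alt_coeff_mult_elem_sym:
  assumes "1 \<le> k"
  shows "alt_coeff n (h * elem_sym n k) = 0"
proof -
  have "h * elem_sym n k = (\<Sum>m\<in>Poly_Mapping.keys h.
      Poly_Mapping.single m (Poly_Mapping.lookup h m) * elem_sym n k)"
    by (subst poly_mapping_sum_single_keys[of h]) (simp add: sum_distrib_right)
  then show ?thesis
    using assms by (simp add: alt_coeff_sum alt_coeff_single_mult_elem_sym)
qed

lemma alt_coeff_mult_sym_ideal:
  assumes "g \<in> sym_ideal n"
  shows "alt_coeff n (h * g) = 0"
proof -
  obtain q where "g = (\<Sum>k=1..n. q k * elem_sym n k)"
    using assms unfolding sym_ideal_def by auto
  then have "h * g = (\<Sum>k=1..n. (h * q k) * elem_sym n k)"
    by (simp add: sum_distrib_left mult.assoc)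
  then show ?thesis
    by (simp add: alt_coeff_sum alt_coeff_mult_elem_sym)
qed

lemma artin_monomial_lookup_outside:
  "artin_monomial n a \<Longrightarrow> i \<notin> {1..n} \<Longrightarrow> Poly_Mapping.lookup a i = 0"
  unfolding artin_monomial_def by (auto simp: in_keys_iff)

lemma artin_monomial_lookup_le:
  "artin_monomial n a \<Longrightarrow> i \<in> {1..n} \<Longrightarrow> Poly_Mapping.lookup a i \<le> n - i"
  unfolding artin_monomial_def by auto

lemma artin_monomial_le_imp_lookup_1_le:
  assumes "artin_monomial n a" "artin_monomial n b" "a \<le> b"
  shows "Poly_Mapping.lookup a 1 \<le> Poly_Mapping.lookup b 1"
proof (cases "a = b")
  case False
  then obtain j where j_less: "Poly_Mapping.lookup a j < Poly_Mapping.lookup b j"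
    and j_eq: "\<forall>i<j. Poly_Mapping.lookup a i = Poly_Mapping.lookup b i"
    using \<open>a \<le> b\<close> by (auto simp: less_eq_poly_mapping_def less_poly_mapping.rep_eq less_fun_def)
  have "j \<noteq> 0"
  proof
    assume "j = 0"
    then show False
      using j_less artin_monomial_lookup_outside[OF assms(2), of 0] by simp
  qed
  then show ?thesis
    using j_less j_eq by (cases "j = 1") auto
qed simp

lemma staircase_minus_add:
  assumes "artin_monomial n a"
  shows "staircase n id - a + a = staircase n id"
proof (rule poly_mapping_eqI)
  fix i
  show "Poly_Mapping.lookup (staircase n id - a + a) i = Poly_Mapping.lookup (staircase n id) i"
  proof (cases "i \<in> {1..n}")
    case True
    then have "Poly_Mapping.lookup a i \<le> n - i"
      by (rule artin_monomial_lookup_le[OF assms])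
    with True show ?thesis
      by (simp add: lookup_add lookup_minus lookup_staircase)
  next
    case False
    then show ?thesis
      using artin_monomial_lookup_outside[OF assms] by (simp add: lookup_add lookup_minus lookup_staircase)
  qed
qed

text \<open>If \<open>j\<close> is the first index where \<open>a\<close> and \<open>b\<close> differ, a permutation producing the
  staircase would fix \<open>1, \<dots>, j - 1\<close> and send \<open>j\<close> below \<open>j\<close>.\<close>
lemma staircase_minus_add_neq:
  assumes a: "artin_monomial n a" and b: "artin_monomial n b" and "a < b"
    and \<sigma>: "\<sigma> permutes {1..n}"
  shows "staircase n id - a + b \<noteq> staircase n \<sigma>"
proof
  assume eq: "staircase n id - a + b = staircase n \<sigma>"
  have eq_at: "n - i - Poly_Mapping.lookup a i + Poly_Mapping.lookup b i = n - \<sigma> i" if "i \<in> {1..n}" for i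
    using that arg_cong[OF eq, of "\<lambda>f. Poly_Mapping.lookup f i"]
    by (simp add: lookup_add lookup_minus lookup_staircase)
  obtain j where j_less: "Poly_Mapping.lookup a j < Poly_Mapping.lookup b j"
    and j_eq: "\<forall>i<j. Poly_Mapping.lookup a i = Poly_Mapping.lookup b i"
    using \<open>a < b\<close> by (auto simp: less_poly_mapping.rep_eq less_fun_def)
  have j: "j \<in> {1..n}"
  proof (rule ccontr)
    assume "j \<notin> {1..n}"
    then show False
      using j_less artin_monomial_lookup_outside[OF b] by simp
  qed
  have fixed: "\<sigma> i = i" if "1 \<le> i" "i < j" for i
  proof -
    have i: "i \<in> {1..n}"
      using that j by auto
    then show ?thesis
      using eq_at[OF i] j_eq that(2) artin_monomial_lookup_le[OF a i] permutes_in_image[OF \<sigma>, of i]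
      by auto
  qed
  have "\<sigma> j \<in> {1..n}"
    using permutes_in_image[OF \<sigma>] j by simp
  then have "\<sigma> j < j"
    using eq_at[OF j] j_less artin_monomial_lookup_le[OF a j] by auto
  then have "\<sigma> (\<sigma> j) = \<sigma> j"
    using fixed \<open>\<sigma> j \<in> {1..n}\<close> by simp
  then show False
    using permutes_inj[OF \<sigma>] \<open>\<sigma> j < j\<close> by (metis injD less_irrefl)
qed

lemma alt_coeff_staircase_minus_Min:
  assumes artin: "\<forall>b\<in>Poly_Mapping.keys q. artin_monomial n b"
    and a: "a = Min (Poly_Mapping.keys q)" "Poly_Mapping.keys q \<noteq> {}"
  shows "alt_coeff n (Poly_Mapping.single (staircase n id - a) 1 * q) = Poly_Mapping.lookup q a"
proof -
  let ?c = "staircase n id - a"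
  have "a \<in> Poly_Mapping.keys q"
    using a by simp
  have "Poly_Mapping.single ?c 1 * q =
      (\<Sum>b\<in>Poly_Mapping.keys q. Poly_Mapping.single (?c + b) (Poly_Mapping.lookup q b))"
    by (subst poly_mapping_sum_single_keys[of q]) (simp add: sum_distrib_left mult_single)
  then have "alt_coeff n (Poly_Mapping.single ?c 1 * q) =
      (\<Sum>b\<in>Poly_Mapping.keys q. alt_coeff n (Poly_Mapping.single (?c + b) (Poly_Mapping.lookup q b)))"
    by (simp add: alt_coeff_sum)
  also have "\<dots> = (\<Sum>b\<in>Poly_Mapping.keys q. if b = a then Poly_Mapping.lookup q a else 0)"
  proof (rule sum.cong)
    fix b
    assume b: "b \<in> Poly_Mapping.keys q"
    show "alt_coeff n (Poly_Mapping.single (?c + b) (Poly_Mapping.lookup q b))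
        = (if b = a then Poly_Mapping.lookup q a else 0)"
    proof (cases "b = a")
      case True
      then show ?thesis
        using staircase_minus_add artin \<open>a \<in> Poly_Mapping.keys q\<close>
        by (simp add: alt_coeff_single_staircase_id)
    next
      case False
      then have "a < b"
        using a b by (simp add: order.not_eq_order_implies_strict)
      have "alt_coeff n (Poly_Mapping.single (?c + b) (Poly_Mapping.lookup q b)) = 0"
        unfolding alt_coeff_single
        using staircase_minus_add_neq[OF _ _ \<open>a < b\<close>] artin b \<open>a \<in> Poly_Mapping.keys q\<close>
        by (intro sum.neutral ballI) simp
      with False show ?thesis
        by simp
    qed
  qed simp
  also have "\<dots> = Poly_Mapping.lookup q a"
    using \<open>a \<in> Poly_Mapping.keys q\<close> by simp
  finally show ?thesis .
qed

lemma alt_coeff_staircase_minus_mult_eq_0: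
  assumes a: "artin_monomial n a"
    and p: "\<forall>b\<in>Poly_Mapping.keys p. Poly_Mapping.lookup a 1 < Poly_Mapping.lookup b 1"
  shows "alt_coeff n (Poly_Mapping.single (staircase n id - a) 1 * p) = 0"
proof -
  let ?c = "staircase n id - a"
  have "staircase n \<sigma> \<notin> Poly_Mapping.keys (Poly_Mapping.single ?c 1 * p)"
    if \<sigma>: "\<sigma> permutes {1..n}" for \<sigma>
  proof
    assume "staircase n \<sigma> \<in> Poly_Mapping.keys (Poly_Mapping.single ?c 1 * p)"
    then obtain b where b: "b \<in> Poly_Mapping.keys p" and eq: "staircase n \<sigma> = ?c + b"
      using keys_mult[of "Poly_Mapping.single ?c 1" p] by auto
    have "Poly_Mapping.lookup (staircase n id) 1
        = Poly_Mapping.lookup ?c 1 + Poly_Mapping.lookup a 1"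
      using arg_cong[OF staircase_minus_add[OF a], of "\<lambda>f. Poly_Mapping.lookup f 1"]
      by (simp add: lookup_add)
    also have "\<dots> < Poly_Mapping.lookup (staircase n \<sigma>) 1"
      using p b by (simp add: eq lookup_add)
    finally show False
      using lookup_staircase_1_le[OF \<sigma>] by simp
  qed
  then show ?thesis
    unfolding alt_coeff_def by (intro sum.neutral) (simp add: in_keys_iff)
qed

theorem artin_reduction_lookup_1_ge:
  assumes reduction: "is_artin_reduction n p p'"
    and p: "\<forall>b\<in>Poly_Mapping.keys p. r \<le> Poly_Mapping.lookup b 1"
  shows "\<forall>m\<in>Poly_Mapping.keys p'. r \<le> Poly_Mapping.lookup m 1"
proof (rule ccontr)
  assume "\<not> ?thesis"
  then obtain m where m: "m \<in> Poly_Mapping.keys p'" "Poly_Mapping.lookup m 1 < r"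
    by (auto simp: not_le)
  have artin: "\<forall>b\<in>Poly_Mapping.keys p'. artin_monomial n b" and ideal: "p - p' \<in> sym_ideal n"
    using reduction unfolding is_artin_reduction_def by auto
  define a where "a = Min (Poly_Mapping.keys p')"
  have keys: "Poly_Mapping.keys p' \<noteq> {}" "a \<in> Poly_Mapping.keys p'"
    using m(1) by (auto simp: a_def intro!: Min_in)
  have "Poly_Mapping.lookup a 1 < r"
    using artin_monomial_le_imp_lookup_1_le[of n a m] artin keys m by (simp add: a_def)
  let ?shift = "Poly_Mapping.single (staircase n id - a) 1"
  have "Poly_Mapping.lookup p' a = alt_coeff n (?shift * p')"
    using alt_coeff_staircase_minus_Min[OF artin a_def keys(1)] by simp
  also have "\<dots> = alt_coeff n (?shift * p)"
    using alt_coeff_mult_sym_ideal[OF ideal, of ?shift]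
    by (simp add: right_diff_distrib alt_coeff_diff)
  also have "\<dots> = 0"
    using artin keys p \<open>Poly_Mapping.lookup a 1 < r\<close>
    by (intro alt_coeff_staircase_minus_mult_eq_0) auto
  finally show False
    using keys(2) by (simp add: in_keys_iff)
qed

theorem lemma2p7:
  fixes n r :: nat and v :: "nat \<Rightarrow>\<^sub>0 nat" and p p' :: "('a::field) mpoly"
  assumes "CHAR('a) = 0 \<or> CHAR('a) > n"
    and "1 \<le> n"
    and "Poly_Mapping.keys v \<subseteq> {1..n}"
    and "Poly_Mapping.lookup v 1 = 0"
    and "p = var 1 ^ r * Poly_Mapping.single v 1"
    and "is_artin_reduction n p p'"
  shows "\<forall>m\<in>Poly_Mapping.keys p'. r \<le> Poly_Mapping.lookup m 1"
proof (rule artin_reduction_lookup_1_ge[OF assms(6)])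
  have "p = Poly_Mapping.single (Poly_Mapping.single 1 r + v) 1"
    using assms(5) by (simp add: var_power mult_single)
  then show "\<forall>b\<in>Poly_Mapping.keys p. r \<le> Poly_Mapping.lookup b 1"
    by (simp add: lookup_add)
qed

end
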